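(* Let $R$ be a unital associative ring. For $M\in M_3(R)$: if $M\in{\cal S}$ then $J_2(M)\in{\cal S}$; and if $M\in{\cal S}$ then all square submatrices of $M^{-1}$ are invertible. Furthermore, $${\rm dom}(J)\cap{\rm dom}(J^{-1})={\cal S}\quad\text{and}\quad{\rm dom}(\Phi)\cap{\rm dom}(\Phi^{-1})=\widehat{\cal S}.$$
   Context: $R^*$: units of $R$. $M_3^*(R)$: invertible $3\times3$ matrices; $M_3^\star(R)$: matrices with all entries in $R^*$. $J_1(M)=M^{-1}$ on $M_3^*(R)$; $J_2(M)_{jk}=(M_{kj})^{-1}$ on $M_3^\star(R)$; $J=J_2\circ J_1$, $J^{-1}=J_1\circ J_2$, where $g\circ f$ has domain $\{x\in{\rm dom}(f):f(x)\in{\rm dom}(g)\}$. $\widehat M_3(R)$: matrices whose first row and column consist of $1$'s. For $A=\{a_{j,k}\}\in M_3^\star(R)$: $\Lambda^L(A)_{j,k}=a_{1,1}a_{j,1}^{-1}a_{j,k}a_{1,k}^{-1}$, $\Lambda^R(A)_{j,k}=a_{j,1}^{-1}a_{j,k}a_{1,k}^{-1}a_{1,1}$. $\Phi(A)=J_2(\Lambda^L(A^{-1}))$ with ${\rm dom}(\Phi)={\rm dom}(J)\cap\widehat M_3(R)\cap M_3^\star(R)$; $\Phi^{-1}(A)=\Lambda^R(J^{-1}(A))$ with domain $\widehat M_3(R)\cap\{M\in{\rm dom}(J^{-1}):J^{-1}(M)\in M_3^\star(R)\}$. ${\cal S}=\{M\in M_3(R):$ all square submatrices of $M$ are invertible and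 $J_2(M)$ is invertible$\}$, $\widehat{\cal S}={\cal S}\cap\widehat M_3(R)$. *)

theory Defs
  imports "HOL-Analysis.Analysis"
begin

definition is_runit :: "'a::ring_1 \<Rightarrow> bool" where
  "is_runit a \<longleftrightarrow> (\<exists>b. a * b = 1 \<and> b * a = 1)"

definition rinv :: "'a::ring_1 \<Rightarrow> 'a" where
  "rinv a = (THE b. a * b = 1 \<and> b * a = 1)"

type_synonym 'a mat3 = "'a ^ 3 ^ 3"

definition submatrix_invertible :: "'a::ring_1 mat3 \<Rightarrow> 3 set \<Rightarrow> 3 set \<Rightarrow> bool" where
  "submatrix_invertible M I J \<longleftrightarrow>
     (\<exists>N :: 3 \<Rightarrow> 3 \<Rightarrow> 'a.
        (\<forall>i\<in>I. \<forall>i'\<in>I. (\<Sum>j\<in>J. M $ i $ j * N j i') = (if i = i' then 1 else 0)) \<and>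
        (\<forall>j\<in>J. \<forall>j'\<in>J. (\<Sum>i\<in>I. N j i * M $ i $ j') = (if j = j' then 1 else 0)))"

definition all_square_submatrices_invertible :: "'a::ring_1 mat3 \<Rightarrow> bool" where
  "all_square_submatrices_invertible M \<longleftrightarrow>
     (\<forall>I J. I \<noteq> {} \<and> card I = card J \<longrightarrow> submatrix_invertible M I J)"

text \<open>M_3^*(R): invertible matrices; M_3^star(R): matrices with all entries units.\<close>
definition Minv3 :: "'a::ring_1 mat3 set" where
  "Minv3 = {M. invertible M}"

definition Mstar3 :: "'a::ring_1 mat3 set" where
  "Mstar3 = {M. \<forall>j k. is_runit (M $ j $ k)}"

definition Mhat3 :: "'a::ring_1 mat3 set" where
  "Mhat3 = {M. \<forall>k. M $ 0 $ k = 1 \<and> M $ k $ 0 = 1}"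

definition J1 :: "'a::ring_1 mat3 \<Rightarrow> 'a mat3 option" where
  "J1 M = (if M \<in> Minv3 then Some (matrix_inv M) else None)"

definition J2 :: "'a::ring_1 mat3 \<Rightarrow> 'a mat3 option" where
  "J2 M = (if M \<in> Mstar3 then Some (\<chi> j k. rinv (M $ k $ j)) else None)"

definition JJ :: "'a::ring_1 mat3 \<Rightarrow> 'a mat3 option" where
  "JJ = J2 \<circ>\<^sub>m J1"

definition JJinv :: "'a::ring_1 mat3 \<Rightarrow> 'a mat3 option" where
  "JJinv = J1 \<circ>\<^sub>m J2"

definition LamL :: "'a::ring_1 mat3 \<Rightarrow> 'a mat3" where
  "LamL A = (\<chi> j k. A $ 0 $ 0 * rinv (A $ j $ 0) * A $ j $ k * rinv (A $ 0 $ k))"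

definition LamR :: "'a::ring_1 mat3 \<Rightarrow> 'a mat3" where
  "LamR A = (\<chi> j k. rinv (A $ j $ 0) * A $ j $ k * rinv (A $ 0 $ k) * A $ 0 $ 0)"

definition Phi :: "'a::ring_1 mat3 \<Rightarrow> 'a mat3 option" where
  "Phi A = (if A \<in> dom JJ \<inter> Mhat3 \<inter> Mstar3 then J2 (LamL (matrix_inv A)) else None)"

definition Phiinv :: "'a::ring_1 mat3 \<Rightarrow> 'a mat3 option" where
  "Phiinv A = (if A \<in> Mhat3 \<and> A \<in> dom JJinv \<and> the (JJinv A) \<in> Mstar3
               then Some (LamR (the (JJinv A))) else None)"

definition SS :: "'a::ring_1 mat3 set" where
  "SS = {M. all_square_submatrices_invertible M \<and> (\<exists>N. J2 M = Some N \<and> invertible N)}"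

definition SShat :: "'a::ring_1 mat3 set" where
  "SShat = SS \<inter> Mhat3"

end

theory Submission
  imports Defs
begin

text \<open>The square submatrices of a 3x3 matrix are its entries, its 2x2 blocks and the matrix
  itself. By Jacobi's complementary minors, which over a noncommutative ring are obtained from
  Schur complements, the 2x2 blocks of an invertible \<open>M\<close> are invertible exactly when the
  corresponding entries of \<open>M\<inverse>\<close> are units. Hence all square submatrices of \<open>M\<close> are
  invertible iff \<open>M\<close> is invertible and both \<open>M\<close> and \<open>M\<inverse>\<close> have unit entries, a condition
  symmetric under inversion; adding invertibility of \<open>J\<^sub>2(M)\<close> gives exactly
  \<open>dom J \<inter> dom J\<inverse>\<close>. For \<open>J\<^sub>2\<close>, a 2x2 block of units is invertible iff
  its Schur complement is a unit, and the Schur complements of a block and of its transposed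
  entrywise inverse differ by unit factors, so \<open>J\<^sub>2\<close> preserves \<open>\<S>\<close>. For \<open>\<Phi>\<close> the only
  additional point is that \<open>\<Lambda>\<^sup>L\<close> keeps the entries units.\<close>

lemma rinv_eqI:
  assumes "a * b = 1" "b * a = 1"
  shows "is_runit a" "rinv a = b"
proof -
  show "is_runit a" using assms unfolding is_runit_def by blast
  show "rinv a = b" unfolding rinv_def
  proof (rule the_equality)
    fix c assume c: "a * c = 1 \<and> c * a = 1"
    have "c = (b * a) * c" using assms by simp
    also have "\<dots> = b" using c by (simp add: mult.assoc)
    finally show "c = b" .
  qed (use assms in auto)
qed

lemma runit_rinv_mult:
  assumes "is_runit a"
  shows "a * rinv a = 1" "rinv a * a = 1"
  using assms rinv_eqI unfolding is_runit_def by metis+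

lemma is_runit_rinv: "is_runit a \<Longrightarrow> is_runit (rinv a)"
  and rinv_rinv: "is_runit a \<Longrightarrow> rinv (rinv a) = a"
  using runit_rinv_mult rinv_eqI by metis+

lemma is_runit_mult:
  assumes "is_runit a" "is_runit b"
  shows "is_runit (a * b)"
proof (rule rinv_eqI)
  show "a * b * (rinv b * rinv a) = 1" "rinv b * rinv a * (a * b) = 1"
    using runit_rinv_mult[OF assms(1)] runit_rinv_mult[OF assms(2)]
    by (metis mult.assoc mult_1_right mult_1_left)+
qed

lemma is_runit_minus: "is_runit a \<Longrightarrow> is_runit (- a)"
  using runit_rinv_mult rinv_eqI[of "-a" "- rinv a"] by auto

definition schur_complement ::
    "('i \<Rightarrow> 'j \<Rightarrow> 'a::ring_1) \<Rightarrow> ('j \<Rightarrow> 'i \<Rightarrow> 'a) \<Rightarrow> 'i set \<Rightarrow> 'j set \<Rightarrow> 'i \<Rightarrow> 'j \<Rightarrow> 'a" where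
  "schur_complement M X I J i j = M i j - (\<Sum>a\<in>J. \<Sum>b\<in>I. M i a * X a b * M b j)"

lemma sum_UNIV_split_Compl:
  fixes f :: "'i::finite \<Rightarrow> 'a::comm_monoid_add"
  shows "sum f UNIV = sum f A + sum f (- A)"
  using sum.subset_diff[of A UNIV f] by (simp add: Compl_eq_Diff_UNIV add.commute)

lemma schur_complement_right_inverse:
  fixes M :: "'i::finite \<Rightarrow> 'j::finite \<Rightarrow> 'a::ring_1" and N X :: "'j \<Rightarrow> 'i \<Rightarrow> 'a"
  assumes MN: "\<And>i i'. (\<Sum>j\<in>UNIV. M i j * N j i') = (if i = i' then 1 else 0)"
    and XM: "\<And>a a'. a \<in> J \<Longrightarrow> a' \<in> J \<Longrightarrow> (\<Sum>b\<in>I. X a b * M b a') = (if a = a' then 1 else 0)"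
    and i: "i \<notin> I" and i': "i' \<notin> I"
  shows "(\<Sum>j\<in>-J. schur_complement M X I J i j * N j i') = (if i = i' then 1 else 0)"
proof -
  have outside: "(\<Sum>j\<in>-J. M b j * N j i') = - (\<Sum>j\<in>J. M b j * N j i')" if "b \<in> I" for b
    using MN[of b i'] sum_UNIV_split_Compl[of "\<lambda>j. M b j * N j i'" J] that i'
    by (auto simp: eq_neg_iff_add_eq_0 add.commute split: if_splits)
  have absorb: "(\<Sum>b\<in>I. X a b * (\<Sum>j\<in>J. M b j * N j i')) = N a i'" if "a \<in> J" for a
  proof -
    have "(\<Sum>b\<in>I. X a b * (\<Sum>j\<in>J. M b j * N j i')) = (\<Sum>j\<in>J. (\<Sum>b\<in>I. X a b * M b j) * N j i')"
      by (simp add: sum_distrib_left sum_distrib_right mult.assoc sum.swap[of _ I])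
    also have "\<dots> = (\<Sum>j\<in>J. if a = j then N j i' else 0)"
      by (rule sum.cong) (simp_all add: XM that)
    also have "\<dots> = N a i'"
      using that by simp
    finally show ?thesis .
  qed
  have "(\<Sum>j\<in>-J. (\<Sum>a\<in>J. \<Sum>b\<in>I. M i a * X a b * M b j) * N j i')
      = (\<Sum>a\<in>J. M i a * (\<Sum>b\<in>I. X a b * (\<Sum>j\<in>-J. M b j * N j i')))"
    by (simp add: sum_distrib_left sum_distrib_right mult.assoc sum.swap[of _ "-J"])
  also have "\<dots> = - (\<Sum>a\<in>J. M i a * N a i')"
    by (simp add: outside absorb sum_negf)
  finally have "(\<Sum>j\<in>-J. schur_complement M X I J i j * N j i')
      = (\<Sum>j\<in>-J. M i j * N j i') + (\<Sum>a\<in>J. M i a * N a i')"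
    by (simp add: schur_complement_def left_diff_distrib sum_subtractf)
  also have "\<dots> = (if i = i' then 1 else 0)"
    using MN sum_UNIV_split_Compl[of "\<lambda>j. M i j * N j i'" J] by (simp add: add.commute)
  finally show ?thesis .
qed

lemma schur_complement_left_inverse:
  fixes M :: "'i::finite \<Rightarrow> 'j::finite \<Rightarrow> 'a::ring_1" and N X :: "'j \<Rightarrow> 'i \<Rightarrow> 'a"
  assumes NM: "\<And>j j'. (\<Sum>i\<in>UNIV. N j i * M i j') = (if j = j' then 1 else 0)"
    and MX: "\<And>b b'. b \<in> I \<Longrightarrow> b' \<in> I \<Longrightarrow> (\<Sum>a\<in>J. M b a * X a b') = (if b = b' then 1 else 0)"
    and j: "j \<notin> J" and j': "j' \<notin> J"
  shows "(\<Sum>i\<in>-I. N j i * schur_complement M X I J i j') = (if j = j' then 1 else 0)"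
proof -
  have outside: "(\<Sum>i\<in>-I. N j i * M i a) = - (\<Sum>i\<in>I. N j i * M i a)" if "a \<in> J" for a
    using NM[of j a] sum_UNIV_split_Compl[of "\<lambda>i. N j i * M i a" I] that j
    by (auto simp: eq_neg_iff_add_eq_0 add.commute split: if_splits)
  have absorb: "(\<Sum>a\<in>J. (\<Sum>i\<in>I. N j i * M i a) * X a b) = N j b" if "b \<in> I" for b
  proof -
    have "(\<Sum>a\<in>J. (\<Sum>i\<in>I. N j i * M i a) * X a b) = (\<Sum>i\<in>I. N j i * (\<Sum>a\<in>J. M i a * X a b))"
      by (simp add: sum_distrib_left sum_distrib_right mult.assoc sum.swap[of _ J])
    also have "\<dots> = (\<Sum>i\<in>I. if i = b then N j i else 0)"
      by (rule sum.cong) (simp_all add: MX that)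
    also have "\<dots> = N j b"
      using that by simp
    finally show ?thesis .
  qed
  have "(\<Sum>i\<in>-I. N j i * (\<Sum>a\<in>J. \<Sum>b\<in>I. M i a * X a b * M b j'))
      = (\<Sum>b\<in>I. (\<Sum>a\<in>J. (\<Sum>i\<in>-I. N j i * M i a) * X a b) * M b j')"
  proof -
    have "(\<Sum>i\<in>-I. N j i * (\<Sum>a\<in>J. \<Sum>b\<in>I. M i a * X a b * M b j'))
        = (\<Sum>a\<in>J. \<Sum>b\<in>I. \<Sum>i\<in>-I. N j i * (M i a * (X a b * M b j')))"
      by (simp add: sum_distrib_left mult.assoc sum.swap[of _ "-I"])
    also have "\<dots> = (\<Sum>b\<in>I. \<Sum>a\<in>J. \<Sum>i\<in>-I. N j i * (M i a * (X a b * M b j')))"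
      by (rule sum.swap)
    finally show ?thesis
      by (simp add: sum_distrib_right mult.assoc)
  qed
  also have "\<dots> = - (\<Sum>b\<in>I. N j b * M b j')"
    by (simp add: outside absorb sum_negf)
  finally have "(\<Sum>i\<in>-I. N j i * schur_complement M X I J i j')
      = (\<Sum>i\<in>-I. N j i * M i j') + (\<Sum>b\<in>I. N j b * M b j')"
    by (simp add: schur_complement_def right_diff_distrib sum_subtractf)
  also have "\<dots> = (if j = j' then 1 else 0)"
    using NM sum_UNIV_split_Compl[of "\<lambda>i. N j i * M i j'" I] by (simp add: add.commute)
  finally show ?thesis .
qed

definition invertible2 :: "'a::ring_1 \<Rightarrow> 'a \<Rightarrow> 'a \<Rightarrow> 'a \<Rightarrow> bool" where
  "invertible2 a b c d \<longleftrightarrow> (\<exists>p q r s.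
      a * p + b * r = 1 \<and> a * q + b * s = 0 \<and> c * p + d * r = 0 \<and> c * q + d * s = 1 \<and>
      p * a + q * c = 1 \<and> p * b + q * d = 0 \<and> r * a + s * c = 0 \<and> r * b + s * d = 1)"

lemma invertible2_swap: "invertible2 a b c d \<Longrightarrow> invertible2 d c b a"
  unfolding invertible2_def by (metis add.commute)

lemma invertible2_imp_runit_schur:
  assumes a: "is_runit a" and inv: "invertible2 a b c d"
  shows "is_runit (d - c * rinv a * b)"
proof -
  obtain p q r s where e: "a * q + b * s = 0" "c * q + d * s = 1" "r * a + s * c = 0" "r * b + s * d = 1"
    using inv unfolding invertible2_def by blast
  note a' = runit_rinv_mult[OF a]
  have q: "q = - (rinv a * b * s)"
  proof -
    have "q = rinv a * (a * q + b * s) - rinv a * (b * s)"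
      using a' by (simp add: distrib_left mult.assoc[symmetric])
    then show ?thesis using e(1) by (simp add: mult.assoc)
  qed
  have r: "r = - (s * c * rinv a)"
  proof -
    have "r = (r * a + s * c) * rinv a - (s * c) * rinv a"
      using a' by (simp add: distrib_right mult.assoc)
    then show ?thesis using e(3) by simp
  qed
  have "(d - c * rinv a * b) * s = c * q + d * s"
    using q by (simp add: algebra_simps)
  moreover have "s * (d - c * rinv a * b) = r * b + s * d"
    using r by (simp add: algebra_simps)
  ultimately show ?thesis
    using e(2,4) rinv_eqI by metis
qed

lemma invertible2_if_runit_schur:
  assumes a: "is_runit a" and u: "is_runit (d - c * rinv a * b)"
  shows "invertible2 a b c d"
proof -
  define a' where "a' = rinv a"
  define w where "w = rinv (d - c * a' * b)"
  have w1: "(d - c * a' * b) * w = 1" and w2: "w * (d - c * a' * b) = 1"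
    using runit_rinv_mult[OF u] by (simp_all add: w_def a'_def)
  have a1: "a * a' = 1" "a' * a = 1"
    using runit_rinv_mult[OF a] by (simp_all add: a'_def)
  then have aa: "a * (a' * x) = x" "a' * (a * x) = x" for x
    by (simp_all add: mult.assoc[symmetric])
  \<comment> \<open>the block-inverse formula, \<open>w\<close> being the inverse of the Schur complement\<close>
  let ?p = "a' + a' * b * w * c * a'" and ?q = "- (a' * b * w)" and ?r = "- (w * c * a')"
  have "a * ?p + b * ?r = 1" "a * ?q + b * w = 0" "?p * a + ?q * c = 1" "?r * a + w * c = 0"
    using a1 by (simp_all add: algebra_simps mult.assoc aa)
  moreover have "c * ?p + d * ?r = 0"
  proof -
    have "c * ?p + d * ?r = c * a' - (d - c * a' * b) * w * c * a'"
      by (simp add: algebra_simps mult.assoc)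
    then show ?thesis using w1 by simp
  qed
  moreover have "c * ?q + d * w = 1"
  proof -
    have "c * ?q + d * w = (d - c * a' * b) * w"
      by (simp add: algebra_simps mult.assoc)
    then show ?thesis using w1 by simp
  qed
  moreover have "?p * b + ?q * d = 0"
  proof -
    have "?p * b + ?q * d = a' * b - a' * b * (w * (d - c * a' * b))"
      by (simp add: algebra_simps mult.assoc)
    then show ?thesis using w2 by simp
  qed
  moreover have "?r * b + w * d = 1"
  proof -
    have "?r * b + w * d = w * (d - c * a' * b)"
      by (simp add: algebra_simps mult.assoc)
    then show ?thesis using w2 by simp
  qed
  ultimately show ?thesis
    unfolding invertible2_def by (intro exI[of _ ?p] exI[of _ ?q] exI[of _ ?r] exI[of _ w]) simp
qed

text \<open>The Schur complement of \<open>d\<close> in the original block and that of \<open>a\<inverse>\<close> in the transposed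
  entrywise inverse differ only by unit factors:
  \<open>b\<inverse> (b d\<inverse> c - a) c\<inverse> = d\<inverse> - b\<inverse> a c\<inverse>\<close>.\<close>
lemma invertible2_rinv_transpose:
  assumes ua: "is_runit a" and ub: "is_runit b" and uc: "is_runit c" and ud: "is_runit d"
    and inv: "invertible2 a b c d"
  shows "invertible2 (rinv a) (rinv c) (rinv b) (rinv d)"
proof -
  have "is_runit (a - b * rinv d * c)"
    using invertible2_imp_runit_schur[OF ud invertible2_swap[OF inv]] .
  then have "is_runit (rinv b * (b * rinv d * c - a) * rinv c)"
    using is_runit_mult is_runit_minus is_runit_rinv ub uc by (metis minus_diff_eq)
  moreover have "rinv b * (b * rinv d * c - a) * rinv c = rinv d - rinv b * a * rinv c"
  proof -
    have "rinv b * (b * rinv d * c) * rinv c = (rinv b * b) * rinv d * (c * rinv c)"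
      by (simp add: mult.assoc)
    then show ?thesis
      using runit_rinv_mult[OF ub] runit_rinv_mult[OF uc] by (simp add: left_diff_distrib right_diff_distrib)
  qed
  ultimately show ?thesis
    using invertible2_if_runit_schur[of "rinv a"] is_runit_rinv[OF ua] rinv_rinv[OF ua] by simp
qed

lemma invertible_matrix_inv_mult:
  fixes M :: "'a::ring_1 mat3"
  assumes "invertible M"
  shows "M ** matrix_inv M = mat 1" "matrix_inv M ** M = mat 1"
proof -
  have "\<exists>N. M ** N = mat 1 \<and> N ** M = mat 1"
    using assms unfolding invertible_def by blast
  then have "M ** matrix_inv M = mat 1 \<and> matrix_inv M ** M = mat 1"
    unfolding matrix_inv_def by (rule someI_ex)
  then show "M ** matrix_inv M = mat 1" "matrix_inv M ** M = mat 1" by auto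
qed

text \<open>Jacobi's complementary minors: the inverse of the block of \<open>B = A\<inverse>\<close> on \<open>(-J, -I)\<close>
  is the Schur complement of the block of \<open>A\<close> on \<open>(I, J)\<close>.\<close>
lemma submatrix_invertible_Compl:
  fixes A B :: "'a::ring_1 mat3"
  assumes AB: "A ** B = mat 1" and BA: "B ** A = mat 1" and sub: "submatrix_invertible A I J"
  shows "submatrix_invertible B (-J) (-I)"
proof -
  obtain X where
    AX: "\<forall>i\<in>I. \<forall>i'\<in>I. (\<Sum>j\<in>J. A $ i $ j * X j i') = (if i = i' then 1 else 0)" and
    XA: "\<forall>j\<in>J. \<forall>j'\<in>J. (\<Sum>i\<in>I. X j i * A $ i $ j') = (if j = j' then 1 else 0)"
    using sub unfolding submatrix_invertible_def by blast
  have "(A ** B) $ i $ i' = mat 1 $ i $ i'" "(B ** A) $ j $ j' = mat 1 $ j $ j'" for i i' j j'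
    using AB BA by simp_all
  then have "\<And>i i'. (\<Sum>j\<in>UNIV. A $ i $ j * B $ j $ i') = (if i = i' then 1 else 0)"
    and "\<And>j j'. (\<Sum>i\<in>UNIV. B $ j $ i * A $ i $ j') = (if j = j' then 1 else 0)"
    by (simp_all add: matrix_matrix_mult_def mat_def)
  note schur_complement_left_inverse[OF this(2)] schur_complement_right_inverse[OF this(1)]
  with AX XA show ?thesis
    unfolding submatrix_invertible_def
    by (intro exI[of _ "schur_complement (\<lambda>i j. A $ i $ j) X I J"]) auto
qed

lemma submatrix_invertible_empty: "submatrix_invertible M {} {}"
  unfolding submatrix_invertible_def by simp

lemma submatrix_invertible_singleton: "submatrix_invertible M {i} {j} \<longleftrightarrow> is_runit (M $ i $ j)"
proof
  assume "submatrix_invertible M {i} {j}"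
  then show "is_runit (M $ i $ j)"
    unfolding submatrix_invertible_def is_runit_def by auto
next
  assume "is_runit (M $ i $ j)"
  then obtain b where "M $ i $ j * b = 1" "b * M $ i $ j = 1"
    unfolding is_runit_def by blast
  then show "submatrix_invertible M {i} {j}"
    unfolding submatrix_invertible_def by (intro exI[of _ "\<lambda>_ _. b"]) auto
qed

lemma submatrix_invertible_UNIV: "submatrix_invertible (M::'a::ring_1 mat3) UNIV UNIV \<longleftrightarrow> invertible M"
proof
  assume "submatrix_invertible M UNIV UNIV"
  then obtain N where N: "\<forall>i i'. (\<Sum>j\<in>UNIV. M $ i $ j * N j i') = (if i = i' then 1 else 0)"
     "\<forall>j j'. (\<Sum>i\<in>UNIV. N j i * M $ i $ j') = (if j = j' then 1 else 0)"
    unfolding submatrix_invertible_def by blast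
  have "M ** (\<chi> j i. N j i) = mat 1" "(\<chi> j i. N j i) ** M = mat 1"
    using N by (simp_all add: matrix_matrix_mult_def mat_def vec_eq_iff)
  then show "invertible M"
    unfolding invertible_def by blast
next
  assume "invertible M"
  then obtain A where "M ** A = mat 1" "A ** M = mat 1"
    unfolding invertible_def by blast
  then have "(M ** A) $ i $ i' = mat 1 $ i $ i'" "(A ** M) $ i $ i' = mat 1 $ i $ i'" for i i'
    by simp_all
  then show "submatrix_invertible M UNIV UNIV"
    unfolding submatrix_invertible_def
    by (intro exI[of _ "\<lambda>j i. A $ j $ i"]) (simp add: matrix_matrix_mult_def mat_def)
qed

lemma submatrix_invertible_pair:
  assumes "i1 \<noteq> i2" "j1 \<noteq> j2"
  shows "submatrix_invertible M {i1, i2} {j1, j2} \<longleftrightarrow>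
         invertible2 (M $ i1 $ j1) (M $ i1 $ j2) (M $ i2 $ j1) (M $ i2 $ j2)"
proof
  assume "submatrix_invertible M {i1, i2} {j1, j2}"
  then obtain N where
    "\<forall>i\<in>{i1,i2}. \<forall>i'\<in>{i1,i2}. (\<Sum>j\<in>{j1,j2}. M $ i $ j * N j i') = (if i = i' then 1 else 0)"
    "\<forall>j\<in>{j1,j2}. \<forall>j'\<in>{j1,j2}. (\<Sum>i\<in>{i1,i2}. N j i * M $ i $ j') = (if j = j' then 1 else 0)"
    unfolding submatrix_invertible_def by blast
  with assms show "invertible2 (M $ i1 $ j1) (M $ i1 $ j2) (M $ i2 $ j1) (M $ i2 $ j2)"
    unfolding invertible2_def
    by (intro exI[of _ "N j1 i1"] exI[of _ "N j1 i2"] exI[of _ "N j2 i1"] exI[of _ "N j2 i2"]) auto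
next
  assume "invertible2 (M $ i1 $ j1) (M $ i1 $ j2) (M $ i2 $ j1) (M $ i2 $ j2)"
  then obtain p q r s where
    "M $ i1 $ j1 * p + M $ i1 $ j2 * r = 1" "M $ i1 $ j1 * q + M $ i1 $ j2 * s = 0"
    "M $ i2 $ j1 * p + M $ i2 $ j2 * r = 0" "M $ i2 $ j1 * q + M $ i2 $ j2 * s = 1"
    "p * M $ i1 $ j1 + q * M $ i2 $ j1 = 1" "p * M $ i1 $ j2 + q * M $ i2 $ j2 = 0"
    "r * M $ i1 $ j1 + s * M $ i2 $ j1 = 0" "r * M $ i1 $ j2 + s * M $ i2 $ j2 = 1"
    unfolding invertible2_def by blast
  with assms show "submatrix_invertible M {i1, i2} {j1, j2}"
    unfolding submatrix_invertible_def
    by (intro exI[of _ "\<lambda>j i. if j = j1 then (if i = i1 then p else q) else (if i = i1 then r else s)"])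
      auto
qed

lemma subset_3_cases:
  fixes I :: "3 set"
  obtains "I = {}" | i where "I = {i}" | i1 i2 where "I = {i1, i2}" "i1 \<noteq> i2" | "I = UNIV"
proof -
  have "card I \<le> 3"
    using card_mono[of UNIV I] by simp
  then consider "card I = 0" | "card I = 1" | "card I = 2" | "card I = 3"
    by linarith
  then show ?thesis
  proof cases
    case 4
    then have "I = UNIV"
      by (intro card_eq_UNIV_imp_eq_UNIV) simp_all
    then show ?thesis by (rule that(4))
  qed (use that in \<open>auto simp: card_1_singleton_iff card_2_iff\<close>)
qed

lemma card_Compl_3: "card (- (I :: 3 set)) = 3 - card I"
  by (simp add: Compl_eq_Diff_UNIV card_Diff_subset)

lemma all_square_submatrices_invertible_iff_card:
  "all_square_submatrices_invertible M \<longleftrightarrow> (\<forall>I J. card I = card J \<longrightarrow> submatrix_invertible M I J)"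
  unfolding all_square_submatrices_invertible_def
proof (intro iffI allI impI)
  fix I J :: "3 set"
  assume nonempty: "\<forall>I J. I \<noteq> {} \<and> card I = card J \<longrightarrow> submatrix_invertible M I J"
    and card: "card I = card J"
  show "submatrix_invertible M I J"
  proof (cases "I = {}")
    case True
    then show ?thesis using card submatrix_invertible_empty by simp
  qed (use nonempty card in blast)
qed blast

lemma all_square_submatrices_invertible_imp_Mstar3:
  "all_square_submatrices_invertible M \<Longrightarrow> M \<in> Mstar3"
  unfolding all_square_submatrices_invertible_iff_card Mstar3_def
  by (auto simp flip: submatrix_invertible_singleton)

lemma all_square_submatrices_invertible_imp_invertible:
  "all_square_submatrices_invertible M \<Longrightarrow> invertible M"
  unfolding all_square_submatrices_invertible_iff_card by (simp flip: submatrix_invertible_UNIV)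

lemma all_square_submatrices_invertible_matrix_inv:
  assumes M: "all_square_submatrices_invertible M"
  shows "all_square_submatrices_invertible (matrix_inv M)"
  unfolding all_square_submatrices_invertible_iff_card
proof (intro allI impI)
  fix I J :: "3 set"
  assume "card I = card J"
  then have "submatrix_invertible M (-J) (-I)"
    using M card_Compl_3 unfolding all_square_submatrices_invertible_iff_card by metis
  with all_square_submatrices_invertible_imp_invertible[OF M]
  show "submatrix_invertible (matrix_inv M) I J"
    using submatrix_invertible_Compl[OF invertible_matrix_inv_mult] by fastforce
qed

lemma all_square_submatrices_invertible_iff:
  "all_square_submatrices_invertible (M::'a::ring_1 mat3) \<longleftrightarrow>
     invertible M \<and> M \<in> Mstar3 \<and> matrix_inv M \<in> Mstar3"
proof (intro iffI conjI)
  assume M: "invertible M \<and> M \<in> Mstar3 \<and> matrix_inv M \<in> Mstar3"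
  note inverse = invertible_matrix_inv_mult[OF conjunct1[OF M]]
  show "all_square_submatrices_invertible M"
    unfolding all_square_submatrices_invertible_iff_card
  proof (intro allI impI)
    fix I J :: "3 set"
    assume card: "card I = card J"
    show "submatrix_invertible M I J"
    proof (cases I rule: subset_3_cases)
      case 1
      then show ?thesis using card submatrix_invertible_empty by simp
    next
      case (2 i)
      then have "card J = 1"
        using card by simp
      then obtain j where "J = {j}"
        by (rule card_1_singletonE)
      then show ?thesis using 2 M submatrix_invertible_singleton unfolding Mstar3_def by blast
    next
      case (3 i1 i2)
      then have "card (-I) = 1" "card (-J) = 1"
        using card card_Compl_3[of I] card_Compl_3[of J] by simp_all
      then obtain i j where ij: "-I = {i}" "-J = {j}"
        by (meson card_1_singletonE)
      have "submatrix_invertible (matrix_inv M) {j} {i}"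
        using M submatrix_invertible_singleton unfolding Mstar3_def by blast
      from submatrix_invertible_Compl[OF inverse(2,1) this] ij show ?thesis
        by (metis double_compl)
    next
      case 4
      then have "J = UNIV"
        using card card_eq_UNIV_imp_eq_UNIV[of J] by simp
      then show ?thesis using 4 M submatrix_invertible_UNIV by blast
    qed
  qed
qed (use all_square_submatrices_invertible_imp_invertible all_square_submatrices_invertible_imp_Mstar3
      all_square_submatrices_invertible_matrix_inv in blast)+

definition J2_mat :: "'a::ring_1 mat3 \<Rightarrow> 'a mat3" where
  "J2_mat M = (\<chi> j k. rinv (M $ k $ j))"

lemma J2_eq_Some: "M \<in> Mstar3 \<Longrightarrow> J2 M = Some (J2_mat M)"
  by (simp add: J2_def J2_mat_def)

lemma J2_mat_J2_mat: "M \<in> Mstar3 \<Longrightarrow> J2_mat (J2_mat M) = M"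
  by (simp add: J2_mat_def Mstar3_def rinv_rinv vec_eq_iff)

lemma SS_iff: "M \<in> SS \<longleftrightarrow> all_square_submatrices_invertible M \<and> invertible (J2_mat M)"
proof -
  have "(\<exists>N. J2 M = Some N \<and> invertible N) \<longleftrightarrow> invertible (J2_mat M)"
    if "all_square_submatrices_invertible M"
    using J2_eq_Some[OF all_square_submatrices_invertible_imp_Mstar3[OF that]] by simp
  then show ?thesis
    unfolding SS_def by blast
qed

lemma all_square_submatrices_invertible_J2_mat:
  assumes M: "all_square_submatrices_invertible M" and inv: "invertible (J2_mat M)"
  shows "all_square_submatrices_invertible (J2_mat M)"
  unfolding all_square_submatrices_invertible_iff_card
proof (intro allI impI)
  have units: "is_runit (M $ j $ k)" for j k
    using all_square_submatrices_invertible_imp_Mstar3[OF M] unfolding Mstar3_def by blast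
  fix I J :: "3 set"
  assume card: "card I = card J"
  show "submatrix_invertible (J2_mat M) I J"
  proof (cases I rule: subset_3_cases)
    case 1
    then show ?thesis using card submatrix_invertible_empty by simp
  next
    case (2 i)
    then have "card J = 1"
      using card by simp
    then obtain j where "J = {j}"
      by (rule card_1_singletonE)
    then show ?thesis
      using 2 units[THEN is_runit_rinv] by (simp add: submatrix_invertible_singleton J2_mat_def)
  next
    case (3 i1 i2)
    then have "card J = 2"
      using card by simp
    then obtain j1 j2 where J: "J = {j1, j2}" "j1 \<noteq> j2"
      unfolding card_2_iff by blast
    have "submatrix_invertible M {j1, j2} {i1, i2}"
      using M 3 J unfolding all_square_submatrices_invertible_iff_card by simp
    then have "invertible2 (M $ j1 $ i1) (M $ j1 $ i2) (M $ j2 $ i1) (M $ j2 $ i2)"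
      using submatrix_invertible_pair J(2) 3(2) by blast
    then have "invertible2 (rinv (M $ j1 $ i1)) (rinv (M $ j2 $ i1)) (rinv (M $ j1 $ i2)) (rinv (M $ j2 $ i2))"
      using invertible2_rinv_transpose units by blast
    then show ?thesis
      unfolding 3(1) J(1) submatrix_invertible_pair[OF 3(2) J(2)] by (simp add: J2_mat_def)
  next
    case 4
    then have "J = UNIV"
      using card card_eq_UNIV_imp_eq_UNIV[of J] by simp
    then show ?thesis using 4 inv submatrix_invertible_UNIV by blast
  qed
qed

lemma J2_mat_SS:
  assumes "M \<in> SS"
  shows "J2_mat M \<in> SS"
proof -
  have M: "all_square_submatrices_invertible M" and inv: "invertible (J2_mat M)"
    using assms SS_iff by blast+
  have "J2_mat (J2_mat M) = M"
    using J2_mat_J2_mat all_square_submatrices_invertible_imp_Mstar3[OF M] .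
  then show ?thesis
    using all_square_submatrices_invertible_J2_mat[OF M inv]
      all_square_submatrices_invertible_imp_invertible[OF M] by (simp add: SS_iff)
qed

lemma dom_JJ: "M \<in> dom JJ \<longleftrightarrow> invertible M \<and> matrix_inv M \<in> Mstar3"
  by (auto simp: JJ_def map_comp_def J1_def Minv3_def J2_def split: option.splits if_splits)

lemma dom_JJinv: "M \<in> dom JJinv \<longleftrightarrow> M \<in> Mstar3 \<and> invertible (J2_mat M)"
  by (auto simp: JJinv_def map_comp_def J1_def Minv3_def J2_def J2_mat_def split: option.splits if_splits)

lemma JJinv_eq_Some:
  "M \<in> Mstar3 \<Longrightarrow> invertible (J2_mat M) \<Longrightarrow> JJinv M = Some (matrix_inv (J2_mat M))"
  by (simp add: JJinv_def map_comp_def J1_def Minv3_def J2_eq_Some)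

lemma dom_JJ_Int_dom_JJinv: "dom JJ \<inter> dom JJinv = (SS :: 'a::ring_1 mat3 set)"
  using dom_JJ dom_JJinv SS_iff all_square_submatrices_invertible_iff by blast

lemma LamL_Mstar3: "A \<in> Mstar3 \<Longrightarrow> LamL A \<in> Mstar3"
  unfolding Mstar3_def LamL_def by (simp add: is_runit_mult is_runit_rinv)

lemma dom_Phi_Int_dom_Phiinv: "dom Phi \<inter> dom Phiinv = (SShat :: 'a::ring_1 mat3 set)"
proof (intro set_eqI iffI)
  fix A :: "'a mat3"
  assume "A \<in> dom Phi \<inter> dom Phiinv"
  then have "A \<in> dom JJ" "A \<in> dom JJinv" "A \<in> Mhat3"
    by (auto simp: Phi_def Phiinv_def split: if_splits)
  then show "A \<in> SShat"
    using dom_JJ_Int_dom_JJinv unfolding SShat_def by blast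
next
  fix A :: "'a mat3"
  assume "A \<in> SShat"
  then have A: "A \<in> SS" and hat: "A \<in> Mhat3"
    unfolding SShat_def by auto
  then have "A \<in> dom JJ" "A \<in> dom JJinv"
    using dom_JJ_Int_dom_JJinv by blast+
  then have JJ: "invertible A" "matrix_inv A \<in> Mstar3"
    and JJinv: "A \<in> Mstar3" "invertible (J2_mat A)"
    using dom_JJ dom_JJinv by blast+
  have "A \<in> dom Phi"
    using \<open>A \<in> dom JJ\<close> hat JJinv(1) LamL_Mstar3[OF JJ(2)]
    by (simp add: Phi_def J2_eq_Some dom_def)
  moreover have "matrix_inv (J2_mat A) \<in> Mstar3"
    using J2_mat_SS[OF A] dom_JJ_Int_dom_JJinv dom_JJ by blast
  then have "A \<in> dom Phiinv"
    using hat \<open>A \<in> dom JJinv\<close> JJinv_eq_Some[OF JJinv] by (simp add: Phiinv_def dom_def)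
  ultimately show "A \<in> dom Phi \<inter> dom Phiinv"
    by blast
qed

theorem lemma8:
  shows "(\<forall>M :: 'a::ring_1 mat3. M \<in> SS \<longrightarrow> (\<exists>N. J2 M = Some N \<and> N \<in> SS)) \<and>
         (\<forall>M :: 'a mat3. M \<in> SS \<longrightarrow> all_square_submatrices_invertible (matrix_inv M)) \<and>
         dom (JJ :: 'a mat3 \<Rightarrow> 'a mat3 option) \<inter> dom JJinv = SS \<and>
         dom (Phi :: 'a mat3 \<Rightarrow> 'a mat3 option) \<inter> dom Phiinv = SShat"
proof (intro conjI allI impI)
  fix M :: "'a mat3"
  assume M: "M \<in> SS"
  then have "all_square_submatrices_invertible M"
    using SS_iff by blast
  then show "all_square_submatrices_invertible (matrix_inv M)"
    by (rule all_square_submatrices_invertible_matrix_inv)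
  show "\<exists>N. J2 M = Some N \<and> N \<in> SS"
    using J2_eq_Some J2_mat_SS[OF M] \<open>all_square_submatrices_invertible M\<close>
      all_square_submatrices_invertible_imp_Mstar3 by blast
qed (fact dom_JJ_Int_dom_JJinv dom_Phi_Int_dom_Phiinv)+

end
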